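(* Let $\Gamma$ be a profinite group and let $n\geq 2$ be even. Let $(Z/Z_0,\partial_Z)$ be an oriented $\Gamma$-covering of degree $2$ with $|Z_0|=n$, and for $i=1,2$ put $C_i(Z/Z_0,\partial_Z)=\{\omega\in C(Z/Z_0)\mid \delta(\omega)=\partial_Z(i)\}$. Then $C(Z/Z_0)=C_1(Z/Z_0,\partial_Z)\sqcup C_2(Z/Z_0,\partial_Z)$, each $C_i(Z/Z_0,\partial_Z)$ is a $\Gamma$-stable subset stable under the complementation map $\omega\mapsto Z\setminus\omega$, which is a fixed-point-free involution on it, so that $C_i(Z/Z_0,\partial_Z)$ is a $\Gamma$-covering of degree $2$ of a $\Gamma$-set with $2^{n-2}$ elements (its set of orbits under complementation); these assignments are functorial with respect to isomorphisms of oriented coverings, giving two functors $C_1,C_2$ from the groupoid of oriented degree-$2$ coverings of $n$-element $\Gamma$-sets to the groupoid of degree-$2$ coverings of $2^{n-2}$-element $\Gamma$-sets. Moreover, two sections $\omega,\omega'\in C(Z/Z_0)$ lie in the same set $C_1(Z/Z_0,\partial_Z)$ or $C_2(Z/Z_0,\partial_Z)$ if and only if $|\omega\cap\omega'|\equiv 0\pmod 2$.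
   Context: A (finite) $\Gamma$-set is a finite set with a continuous left action of $\Gamma$. A $\Gamma$-covering of degree $2$ is a $\Gamma$-equivariant map $\pi\colon Z\to Z_0$ of $\Gamma$-sets all of whose fibers have $2$ elements; $\sigma$ denotes the involution of $Z$ swapping the elements of each fiber. $C(Z/Z_0)$ is the $\Gamma$-set of all subsets $\{z_1,\dots,z_n\}\subset Z$ mapping bijectively onto $Z_0$. For a $\Gamma$-set $X$ with $m\ge 2$ elements, $\Delta(X)$ is the two-element $\Gamma$-set of $\mathfrak A_m$-orbits of orderings $(x_1,\dots,x_m)$ of $X$. The map $\delta\colon C(Z/Z_0)\to\Delta(Z)$ sends $\{z_1,\dots,z_n\}$ to the $\mathfrak A_{2n}$-orbit of $(z_1,\dots,z_n,\sigma(z_1),\dots,\sigma(z_n))$. An orientation of $Z$ is an isomorphism of $\Gamma$-sets $\partial_Z\colon\{1,2\}\to\Delta(Z)$, where $\{1,2\}$ has trivial $\Gamma$-action (so $\Gamma$ must act trivially on $\Delta(Z)$); an oriented covering is a pair $(Z/Z_0,\partial_Z)$, and morphisms of oriented coverings are isomorphisms of coverings $f$ compatible with the orientations (i.e. the induced map $\Delta(f)$ carries one orientation to the other). *)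

theory Defs
  imports "HOL-Analysis.Analysis" "HOL-Algebra.Group_Action" "HOL-Combinatorics.Permutations"
begin

definition profinite_group :: "('g, 'm) monoid_scheme \<Rightarrow> 'g topology \<Rightarrow> bool" where
  "profinite_group G T \<longleftrightarrow>
     group G \<and> topspace T = carrier G \<and>
     compact_space T \<and> Hausdorff_space T \<and>
     (\<forall>x \<in> topspace T. connected_component_of_set T x = {x}) \<and>
     continuous_map (prod_topology T T) T (\<lambda>(x, y). x \<otimes>\<^bsub>G\<^esub> y) \<and>
     continuous_map T T (\<lambda>x. inv\<^bsub>G\<^esub> x)"

definition gamma_set :: "('g, 'm) monoid_scheme \<Rightarrow> 'g topology \<Rightarrow> 'x set \<Rightarrow> ('g \<Rightarrow> 'x \<Rightarrow> 'x) \<Rightarrow> bool" where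
  "gamma_set G T X act \<longleftrightarrow>
     finite X \<and> group_action G X act \<and>
     continuous_map (prod_topology T (discrete_topology X)) (discrete_topology X)
        (\<lambda>(g, x). act g x)"

definition covering2 ::
  "('g, 'm) monoid_scheme \<Rightarrow> 'g topology \<Rightarrow> 'z set \<Rightarrow> 'y set \<Rightarrow>
   ('g \<Rightarrow> 'z \<Rightarrow> 'z) \<Rightarrow> ('g \<Rightarrow> 'y \<Rightarrow> 'y) \<Rightarrow> ('z \<Rightarrow> 'y) \<Rightarrow> bool" where
  "covering2 G T Z Z0 act act0 \<pi> \<longleftrightarrow>
     gamma_set G T Z act \<and> gamma_set G T Z0 act0 \<and>
     (\<forall>z \<in> Z. \<pi> z \<in> Z0) \<and>
     (\<forall>g \<in> carrier G. \<forall>z \<in> Z. \<pi> (act g z) = act0 g (\<pi> z)) \<and>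
     (\<forall>y \<in> Z0. card {z \<in> Z. \<pi> z = y} = 2)"

definition covering_iso ::
  "('g, 'm) monoid_scheme \<Rightarrow>
   'z set \<Rightarrow> 'y set \<Rightarrow> ('g \<Rightarrow> 'z \<Rightarrow> 'z) \<Rightarrow> ('g \<Rightarrow> 'y \<Rightarrow> 'y) \<Rightarrow> ('z \<Rightarrow> 'y) \<Rightarrow>
   'w set \<Rightarrow> 'v set \<Rightarrow> ('g \<Rightarrow> 'w \<Rightarrow> 'w) \<Rightarrow> ('g \<Rightarrow> 'v \<Rightarrow> 'v) \<Rightarrow> ('w \<Rightarrow> 'v) \<Rightarrow>
   ('z \<Rightarrow> 'w) \<Rightarrow> ('y \<Rightarrow> 'v) \<Rightarrow> bool" where
  "covering_iso G Z Z0 act act0 \<pi> Z' Z0' act' act0' \<pi>' f f0 \<longleftrightarrow>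
     bij_betw f Z Z' \<and> bij_betw f0 Z0 Z0' \<and>
     (\<forall>g \<in> carrier G. \<forall>z \<in> Z. f (act g z) = act' g (f z)) \<and>
     (\<forall>g \<in> carrier G. \<forall>y \<in> Z0. f0 (act0 g y) = act0' g (f0 y)) \<and>
     (\<forall>z \<in> Z. \<pi>' (f z) = f0 (\<pi> z))"

definition sheet_swap :: "'z set \<Rightarrow> ('z \<Rightarrow> 'y) \<Rightarrow> 'z \<Rightarrow> 'z" where
  "sheet_swap Z \<pi> z = (THE z'. z' \<in> Z \<and> \<pi> z' = \<pi> z \<and> z' \<noteq> z)"

definition sections :: "'z set \<Rightarrow> 'y set \<Rightarrow> ('z \<Rightarrow> 'y) \<Rightarrow> 'z set set" where
  "sections Z Z0 \<pi> = {S. S \<subseteq> Z \<and> bij_betw \<pi> S Z0}"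

definition image_act :: "'s set set \<Rightarrow> ('g \<Rightarrow> 's \<Rightarrow> 's) \<Rightarrow> 'g \<Rightarrow> 's set \<Rightarrow> 's set" where
  "image_act C act g = (\<lambda>S \<in> C. act g ` S)"

definition orderings :: "'x set \<Rightarrow> 'x list set" where
  "orderings X = {xs. distinct xs \<and> set xs = X}"

definition alt_related :: "'x list \<Rightarrow> 'x list \<Rightarrow> bool" where
  "alt_related xs ys \<longleftrightarrow>
     (\<exists>p. p permutes {..<length xs} \<and> evenperm p \<and>
          ys = map (\<lambda>i. xs ! p i) [0..<length xs])"

definition alt_orbit :: "'x list \<Rightarrow> 'x list set" where
  "alt_orbit xs = {ys. alt_related xs ys}"

definition Delta :: "'x set \<Rightarrow> 'x list set set" where
  "Delta X = alt_orbit ` orderings X"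

definition Delta_map :: "('x \<Rightarrow> 'w) \<Rightarrow> 'x list set \<Rightarrow> 'w list set" where
  "Delta_map f D = map f ` D"

definition Delta_act :: "'x set \<Rightarrow> ('g \<Rightarrow> 'x \<Rightarrow> 'x) \<Rightarrow> 'g \<Rightarrow> 'x list set \<Rightarrow> 'x list set" where
  "Delta_act X act g = (\<lambda>D \<in> Delta X. Delta_map (act g) D)"

text \<open>Orientation: Gamma-isomorphism from the trivial Gamma-set {1,2} to Delta(Z).\<close>
definition orientation ::
  "('g, 'm) monoid_scheme \<Rightarrow> 'z set \<Rightarrow> ('g \<Rightarrow> 'z \<Rightarrow> 'z) \<Rightarrow> (nat \<Rightarrow> 'z list set) \<Rightarrow> bool" where
  "orientation G Z act ori \<longleftrightarrow>
     bij_betw ori {1, 2} (Delta Z) \<and>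
     (\<forall>g \<in> carrier G. \<forall>i \<in> {1, 2}. Delta_act Z act g (ori i) = ori i)"

definition delta_map :: "'z set \<Rightarrow> ('z \<Rightarrow> 'y) \<Rightarrow> 'z set \<Rightarrow> 'z list set" where
  "delta_map Z \<pi> \<omega> =
     (let xs = (SOME xs. xs \<in> orderings \<omega>) in alt_orbit (xs @ map (sheet_swap Z \<pi>) xs))"

definition C_part :: "'z set \<Rightarrow> 'y set \<Rightarrow> ('z \<Rightarrow> 'y) \<Rightarrow> (nat \<Rightarrow> 'z list set) \<Rightarrow> nat \<Rightarrow> 'z set set" where
  "C_part Z Z0 \<pi> ori i = {\<omega> \<in> sections Z Z0 \<pi>. delta_map Z \<pi> \<omega> = ori i}"

definition compl_pair :: "'z set \<Rightarrow> 'z set \<Rightarrow> 'z set set" where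
  "compl_pair Z \<omega> = {\<omega>, Z - \<omega>}"

definition compl_quot :: "'z set \<Rightarrow> 'z set set \<Rightarrow> 'z set set set" where
  "compl_quot Z C = compl_pair Z ` C"

definition quot_act :: "'z set set set \<Rightarrow> ('g \<Rightarrow> 'z \<Rightarrow> 'z) \<Rightarrow> 'g \<Rightarrow> 'z set set \<Rightarrow> 'z set set" where
  "quot_act Q act g = (\<lambda>q \<in> Q. (\<lambda>\<omega>. act g ` \<omega>) ` q)"

end

theory Submission
  imports Defs
begin

text \<open>A section \<open>\<omega>\<close> of \<open>Z/Z0\<close> meets every fibre once, so \<open>Z - \<omega> = \<sigma> ` \<omega>\<close> and
  \<open>(z\<^sub>1, \<dots>, z\<^sub>n, \<sigma> z\<^sub>1, \<dots>, \<sigma> z\<^sub>n)\<close> is an ordering of \<open>Z\<close> whose \<open>\<AA>\<^sub>2\<^sub>n\<close>-orbit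
  \<open>\<delta>(\<omega>)\<close> does not depend on the chosen ordering of \<open>\<omega>\<close>. For two sections \<open>\<omega>, \<omega>'\<close>, the
  permutation of \<open>Z\<close> exchanging \<open>z\<close> and \<open>\<sigma> z\<close> for \<open>z \<in> \<omega> - \<omega>'\<close> commutes with \<open>\<sigma>\<close> and
  carries an ordering attached to \<open>\<omega>\<close> to one attached to \<open>\<omega>'\<close>; it is a product of
  \<open>|\<omega> - \<omega>'|\<close> transpositions, so \<open>\<delta>(\<omega>) = \<delta>(\<omega>')\<close> iff \<open>|\<omega> - \<omega>'|\<close> is even, i.e. (as \<open>n\<close> is
  even) iff \<open>|\<omega> \<inter> \<omega>'|\<close> is even. Hence \<open>C\<^sub>1, C\<^sub>2\<close> partition the sections and are closed under
  complementation, since \<open>|\<omega> - (Z - \<omega>)| = n\<close>. Isomorphisms of coverings commute with \<open>\<sigma>\<close>, hence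
  with \<open>\<delta>\<close>, which gives \<open>\<Gamma>\<close>-stability and functoriality. Exchanging the two points of one fibre
  is odd and maps \<open>C\<^sub>1\<close> onto \<open>C\<^sub>2\<close>, so \<open>|C\<^sub>i| = 2\<^sup>n\<^sup>-\<^sup>1\<close> and the quotient by complementation
  has \<open>2\<^sup>n\<^sup>-\<^sup>2\<close> elements.\<close>

section \<open>Even reorderings of lists\<close>

lemma ex_orderings: "finite S \<Longrightarrow> \<exists>xs. xs \<in> orderings S"
  unfolding orderings_def using finite_distinct_list by auto

lemma map_in_orderings:
  "xs \<in> orderings S \<Longrightarrow> inj_on f S \<Longrightarrow> map f xs \<in> orderings (f ` S)"
  by (auto simp: orderings_def distinct_map)

lemma ex_permutes_map_eq:
  assumes xs: "xs \<in> orderings S" and ys: "ys \<in> orderings S"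
  shows "\<exists>q. q permutes S \<and> ys = map q xs"
proof -
  have "distinct xs" "distinct ys" "set ys = set xs" using xs ys by (auto simp: orderings_def)
  then have len: "length ys = length xs" by (metis distinct_card)
  have bx: "bij_betw ((!) xs) {..<length xs} S" and bys: "bij_betw ((!) ys) {..<length xs} S"
    using xs ys len by (auto simp: orderings_def intro!: bij_betw_nth)
  define q where "q = restrict_id ((!) ys \<circ> inv_into {..<length xs} ((!) xs)) S"
  have "bij_betw ((!) ys \<circ> inv_into {..<length xs} ((!) xs)) S S"
    by (rule bij_betw_trans[OF bij_betw_inv_into[OF bx] bys])
  then have "bij_betw q S S"
    by (rule bij_betw_cong[THEN iffD1, rotated]) (simp add: q_def restrict_id_def)
  then have "q permutes S"
    by (rule bij_imp_permutes) (simp add: q_def restrict_id_def)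
  moreover have "ys = map q xs"
  proof (rule nth_equalityI)
    fix i assume "i < length ys"
    then have "i \<in> {..<length xs}" "xs ! i \<in> S" using len bx by (auto simp: bij_betw_def)
    then show "ys ! i = map q xs ! i"
      using bij_betw_imp_inj_on[OF bx] by (simp add: q_def restrict_id_def)
  qed (simp add: len)
  ultimately show ?thesis by blast
qed

lemma map_nth_eq_map_permutation:
  assumes "distinct l" "p permutes {..<length l}"
  shows "map (\<lambda>i. l ! p i) [0..<length l] = map (map_permutation {..<length l} ((!) l) p) l"
proof (rule nth_equalityI)
  fix i assume "i < length (map (\<lambda>i. l ! p i) [0..<length l])"
  then show "map (\<lambda>i. l ! p i) [0..<length l] ! i = map (map_permutation {..<length l} ((!) l) p) l ! i"
    using assms by (simp add: map_permutation_apply inj_on_nth)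
qed simp

lemma alt_related_iff_permutes:
  assumes "distinct l"
  shows "alt_related l ys \<longleftrightarrow> (\<exists>q. q permutes set l \<and> evenperm q \<and> ys = map q l)"
proof -
  let ?I = "{..<length l}"
  have bij: "bij_betw ((!) l) ?I (set l)" using assms by (intro bij_betw_nth) auto
  have inj: "inj_on ((!) l) ?I" using bij by (rule bij_betw_imp_inj_on)
  have "alt_related l ys \<longleftrightarrow>
      (\<exists>p. p permutes ?I \<and> evenperm p \<and> ys = map (map_permutation ?I ((!) l) p) l)"
    unfolding alt_related_def using map_nth_eq_map_permutation[OF assms] by (intro ex_cong1) auto
  also have "\<dots> \<longleftrightarrow> (\<exists>q. q permutes set l \<and> evenperm q \<and> ys = map q l)"
  proof
    assume "\<exists>p. p permutes ?I \<and> evenperm p \<and> ys = map (map_permutation ?I ((!) l) p) l"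
    then obtain p where p: "p permutes ?I" "evenperm p" "ys = map (map_permutation ?I ((!) l) p) l"
      by blast
    then show "\<exists>q. q permutes set l \<and> evenperm q \<and> ys = map q l"
      using map_permutation_permutes[OF bij p(1)] evenperm_map_permutation[OF inj p(1)] by auto
  next
    assume "\<exists>q. q permutes set l \<and> evenperm q \<and> ys = map q l"
    then obtain q where q: "q permutes set l" "evenperm q" "ys = map q l" by blast
    define p where "p = map_permutation (set l) (inv_into ?I ((!) l)) q"
    have "bij_betw (inv_into ?I ((!) l)) (set l) ?I" by (rule bij_betw_inv_into[OF bij])
    then have "p permutes ?I" "evenperm p"
      unfolding p_def using q(1,2)
      by (auto simp: evenperm_map_permutation bij_betw_imp_inj_on intro: map_permutation_permutes)
    moreover have "map_permutation ?I ((!) l) p = q"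
      unfolding p_def using bij_betw_inv_into[OF bij] q(1)
      by (rule map_permutation_compose_inv) (use bij in \<open>simp add: bij_betw_def f_inv_into_f\<close>)
    ultimately show "\<exists>p. p permutes ?I \<and> evenperm p \<and> ys = map (map_permutation ?I ((!) l) p) l"
      using q(3) by blast
  qed
  finally show ?thesis .
qed

lemma alt_orbit_eq:
  assumes "distinct l"
  shows "alt_orbit l = {map q l | q. q permutes set l \<and> evenperm q}"
  unfolding alt_orbit_def alt_related_iff_permutes[OF assms] by blast

lemma map_eq_imp_permutes_eq:
  assumes "map p l = map q l" "p permutes set l" "q permutes set l"
  shows "p = q"
proof
  fix x show "p x = q x"
    using assms by (cases "x \<in> set l") (auto simp: permutes_not_in map_eq_conv)
qed

lemma alt_orbit_map_subset:
  assumes l: "distinct l" and q: "q permutes set l" "evenperm q"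
  shows "alt_orbit (map q l) \<subseteq> alt_orbit l"
proof
  have ql: "distinct (map q l)" "set (map q l) = set l"
    using l q(1) by (auto simp: distinct_map permutes_inj_on permutes_image)
  fix ys assume "ys \<in> alt_orbit (map q l)"
  then obtain r where r: "r permutes set l" "evenperm r" "ys = map (r \<circ> q) l"
    unfolding alt_orbit_eq[OF ql(1)] ql(2) by auto
  have "r \<circ> q permutes set l" "evenperm (r \<circ> q)"
    using r q permutes_compose[OF q(1) r(1)]
      evenperm_comp[OF permutes_imp_permutation[OF finite_set r(1)] permutes_imp_permutation[OF finite_set q(1)]]
    by auto
  then show "ys \<in> alt_orbit l" unfolding alt_orbit_eq[OF l] using r(3) by blast
qed

lemma alt_orbit_map_eq_iff:
  assumes l: "distinct l" and q: "q permutes set l"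
  shows "alt_orbit (map q l) = alt_orbit l \<longleftrightarrow> evenperm q"
proof -
  have ql: "distinct (map q l)" "set (map q l) = set l"
    using l q by (auto simp: distinct_map permutes_inj_on permutes_image)
  show ?thesis
  proof
    assume eq: "alt_orbit (map q l) = alt_orbit l"
    have "map q l \<in> alt_orbit (map q l)"
      unfolding alt_orbit_eq[OF ql(1)] by (auto intro!: exI[of _ id] permutes_id)
    then obtain r where "r permutes set l" "evenperm r" "map q l = map r l"
      unfolding eq alt_orbit_eq[OF l] by blast
    then show "evenperm q" using map_eq_imp_permutes_eq q by metis
  next
    assume even: "evenperm q"
    have "alt_orbit (map (Hilbert_Choice.inv q) (map q l)) \<subseteq> alt_orbit (map q l)"
      using alt_orbit_map_subset[OF ql(1)] ql(2) permutes_inv[OF q] even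
        evenperm_inv[OF permutes_imp_permutation[OF finite_set q]] by simp
    moreover have "map (Hilbert_Choice.inv q) (map q l) = l"
      using permutes_inverses(2)[OF q] by (simp add: map_idI)
    ultimately show "alt_orbit (map q l) = alt_orbit l"
      using alt_orbit_map_subset[OF l q even] by auto
  qed
qed

lemma Delta_map_alt_orbit: "Delta_map f (alt_orbit l) = alt_orbit (map f l)"
proof -
  let ?P = "{p. p permutes {..<length l} \<and> evenperm p}"
  have "Delta_map f (alt_orbit l) = (\<lambda>p. map f (map (\<lambda>i. l ! p i) [0..<length l])) ` ?P"
    unfolding Delta_map_def alt_orbit_def alt_related_def by blast
  also have "\<dots> = (\<lambda>p. map (\<lambda>i. map f l ! p i) [0..<length l]) ` ?P"
  proof (rule image_cong[OF refl])
    fix p assume "p \<in> ?P"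
    then have "p i < length l" if "i < length l" for i
      using permutes_in_image that by fastforce
    then show "map f (map (\<lambda>i. l ! p i) [0..<length l]) = map (\<lambda>i. map f l ! p i) [0..<length l]"
      by simp
  qed
  also have "\<dots> = alt_orbit (map f l)"
    unfolding alt_orbit_def alt_related_def by auto
  finally show ?thesis .
qed

section \<open>Double covers and their sections\<close>

locale double_cover =
  fixes Z :: "'z set" and Z0 :: "'y set" and \<pi> :: "'z \<Rightarrow> 'y"
  assumes finite_total: "finite Z"
    and maps_to_base: "\<And>z. z \<in> Z \<Longrightarrow> \<pi> z \<in> Z0"
    and card_fibre: "\<And>y. y \<in> Z0 \<Longrightarrow> card {z \<in> Z. \<pi> z = y} = 2"
begin

abbreviation \<sigma> :: "'z \<Rightarrow> 'z" where "\<sigma> \<equiv> sheet_swap Z \<pi>"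

lemma fibre_eq:
  assumes z: "z \<in> Z"
  shows "{x \<in> Z. \<pi> x = \<pi> z} = {z, \<sigma> z}" and "\<sigma> z \<noteq> z"
proof -
  obtain w where w: "{x \<in> Z. \<pi> x = \<pi> z} = {z, w}" "w \<noteq> z"
  proof -
    obtain a b where ab: "{x \<in> Z. \<pi> x = \<pi> z} = {a, b}" "a \<noteq> b"
      using card_fibre[OF maps_to_base[OF z]] by (auto simp: card_2_iff)
    then have "z = a \<or> z = b" using z by blast
    then show thesis
    proof
      assume "z = a" then show thesis using that[of b] ab by simp
    next
      assume "z = b" then show thesis using that[of a] ab by (simp add: insert_commute)
    qed
  qed
  have "\<sigma> z = w"
    unfolding sheet_swap_def by (rule the_equality) (use w in blast)+
  then show "{x \<in> Z. \<pi> x = \<pi> z} = {z, \<sigma> z}" and "\<sigma> z \<noteq> z" using w by simp_all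
qed

lemma sheet_swap_in_fibre:
  assumes "z \<in> Z" shows "\<sigma> z \<in> Z" and "\<pi> (\<sigma> z) = \<pi> z"
  using fibre_eq(1)[OF assms] by blast+

lemma fibre_cases: "z \<in> Z \<Longrightarrow> x \<in> Z \<Longrightarrow> \<pi> x = \<pi> z \<Longrightarrow> x = z \<or> x = \<sigma> z"
  using fibre_eq(1) by blast

lemma sheet_swap_sheet_swap [simp]:
  assumes "z \<in> Z" shows "\<sigma> (\<sigma> z) = z"
proof -
  have "\<sigma> (\<sigma> z) = z \<or> \<sigma> (\<sigma> z) = \<sigma> z"
    using assms by (intro fibre_cases) (simp_all add: sheet_swap_in_fibre)
  then show ?thesis using fibre_eq(2)[OF sheet_swap_in_fibre(1)[OF assms]] by blast
qed

lemma inj_on_sheet_swap: "inj_on \<sigma> Z"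
  by (metis inj_onI sheet_swap_sheet_swap)

lemma restrict_id_sheet_swap_permutes: "restrict_id \<sigma> Z permutes Z"
  by (rule bij_imp_permutes, rule bij_betw_byWitness[where f' = "restrict_id \<sigma> Z"])
    (auto simp: restrict_id_def sheet_swap_in_fibre)

lemma ex_in_fibre: "y \<in> Z0 \<Longrightarrow> \<exists>z \<in> Z. \<pi> z = y"
  using card_fibre[of y] by (metis (mono_tags, lifting) card.empty empty_Collect_eq zero_neq_numeral)

lemma finite_base: "finite Z0"
proof (rule finite_subset[OF _ finite_imageI[OF finite_total]])
  show "Z0 \<subseteq> \<pi> ` Z" using ex_in_fibre by blast
qed

lemma sections_iff: "\<omega> \<in> sections Z Z0 \<pi> \<longleftrightarrow> \<omega> \<subseteq> Z \<and> (\<forall>z\<in>Z. z \<in> \<omega> \<longleftrightarrow> \<sigma> z \<notin> \<omega>)"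
proof
  assume "\<omega> \<in> sections Z Z0 \<pi>"
  then have sub: "\<omega> \<subseteq> Z" and inj: "inj_on \<pi> \<omega>" and img: "\<pi> ` \<omega> = Z0"
    by (auto simp: sections_def bij_betw_def)
  show "\<omega> \<subseteq> Z \<and> (\<forall>z\<in>Z. z \<in> \<omega> \<longleftrightarrow> \<sigma> z \<notin> \<omega>)"
  proof (intro conjI sub ballI iffI notI)
    fix z assume z: "z \<in> Z" and "z \<in> \<omega>" "\<sigma> z \<in> \<omega>"
    then have "\<sigma> z = z" by (intro inj_onD[OF inj sheet_swap_in_fibre(2)[OF z]])
    then show False using fibre_eq(2)[OF z] by simp
  next
    fix z assume z: "z \<in> Z" and "\<sigma> z \<notin> \<omega>"
    have "\<pi> z \<in> \<pi> ` \<omega>" using img maps_to_base[OF z] by simp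
    then obtain w where w: "w \<in> \<omega>" "\<pi> w = \<pi> z" by (metis imageE)
    then have "w = z \<or> w = \<sigma> z" using sub by (intro fibre_cases[OF z]) auto
    then show "z \<in> \<omega>" using w(1) \<open>\<sigma> z \<notin> \<omega>\<close> by auto
  qed
next
  assume "\<omega> \<subseteq> Z \<and> (\<forall>z\<in>Z. z \<in> \<omega> \<longleftrightarrow> \<sigma> z \<notin> \<omega>)"
  then have sub: "\<omega> \<subseteq> Z" and mem: "\<And>z. z \<in> Z \<Longrightarrow> z \<in> \<omega> \<longleftrightarrow> \<sigma> z \<notin> \<omega>" by auto
  have "inj_on \<pi> \<omega>"
  proof (rule inj_onI)
    fix x y assume "x \<in> \<omega>" "y \<in> \<omega>" "\<pi> x = \<pi> y"
    then show "x = y" using fibre_cases[of x y] mem[of x] sub by auto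
  qed
  moreover have "Z0 \<subseteq> \<pi> ` \<omega>"
  proof
    fix y assume y: "y \<in> Z0"
    obtain z where z: "z \<in> Z" "\<pi> z = y" using ex_in_fibre[OF y] by blast
    then show "y \<in> \<pi> ` \<omega>"
      using mem[OF z(1)] sheet_swap_in_fibre(2)[OF z(1)] image_eqI[of y \<pi> z \<omega>]
        image_eqI[of y \<pi> "\<sigma> z" \<omega>] by auto
  qed
  ultimately show "\<omega> \<in> sections Z Z0 \<pi>"
    using sub maps_to_base by (auto simp: sections_def bij_betw_def)
qed

lemma sections_subset: "\<omega> \<in> sections Z Z0 \<pi> \<Longrightarrow> \<omega> \<subseteq> Z"
  by (simp add: sections_def)

lemma section_mem_iff: "\<omega> \<in> sections Z Z0 \<pi> \<Longrightarrow> z \<in> Z \<Longrightarrow> z \<in> \<omega> \<longleftrightarrow> \<sigma> z \<notin> \<omega>"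
  unfolding sections_iff by blast

lemma compl_section_eq_image:
  assumes \<omega>: "\<omega> \<in> sections Z Z0 \<pi>" shows "Z - \<omega> = \<sigma> ` \<omega>"
proof
  show "Z - \<omega> \<subseteq> \<sigma> ` \<omega>"
  proof
    fix z assume "z \<in> Z - \<omega>"
    then have "z \<in> Z" "\<sigma> z \<in> \<omega>" using section_mem_iff[OF \<omega>, of z] by auto
    then show "z \<in> \<sigma> ` \<omega>" using image_eqI[of z \<sigma> "\<sigma> z" \<omega>] by simp
  qed
  show "\<sigma> ` \<omega> \<subseteq> Z - \<omega>"
  proof
    fix z assume "z \<in> \<sigma> ` \<omega>"
    then obtain x where x: "x \<in> \<omega>" "z = \<sigma> x" by auto
    then have "x \<in> Z" using sections_subset[OF \<omega>] by auto
    then show "z \<in> Z - \<omega>" using x section_mem_iff[OF \<omega>, of x] sheet_swap_in_fibre(1) by simp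
  qed
qed

lemma compl_in_sections:
  assumes \<omega>: "\<omega> \<in> sections Z Z0 \<pi>" shows "Z - \<omega> \<in> sections Z Z0 \<pi>"
  unfolding sections_iff
proof (intro conjI ballI)
  fix z assume z: "z \<in> Z"
  show "z \<in> Z - \<omega> \<longleftrightarrow> \<sigma> z \<notin> Z - \<omega>"
    using section_mem_iff[OF \<omega> z] sheet_swap_in_fibre(1)[OF z] z by simp
qed blast

lemma compl_neq: "Z0 \<noteq> {} \<Longrightarrow> Z - \<omega> \<noteq> \<omega>"
  using ex_in_fibre by blast

lemma card_section: "\<omega> \<in> sections Z Z0 \<pi> \<Longrightarrow> card \<omega> = card Z0"
  by (auto simp: sections_def bij_betw_same_card)

lemma finite_section: "\<omega> \<in> sections Z Z0 \<pi> \<Longrightarrow> finite \<omega>"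
  using finite_subset[OF sections_subset finite_total] .

definition doubled :: "'z list \<Rightarrow> 'z list" where
  "doubled xs = xs @ map \<sigma> xs"

lemma doubled_in_orderings:
  assumes \<omega>: "\<omega> \<in> sections Z Z0 \<pi>" and xs: "xs \<in> orderings \<omega>"
  shows "doubled xs \<in> orderings Z"
proof -
  have d: "distinct xs" "set xs = \<omega>" using xs by (auto simp: orderings_def)
  have sub: "\<omega> \<subseteq> Z" using sections_subset[OF \<omega>] .
  have "distinct (map \<sigma> xs)"
    using d sub inj_on_sheet_swap by (simp add: distinct_map inj_on_subset)
  moreover have "set xs \<inter> set (map \<sigma> xs) = {}"
    using d compl_section_eq_image[OF \<omega>] by auto
  moreover have "set xs \<union> set (map \<sigma> xs) = Z"
    using d sub compl_section_eq_image[OF \<omega>] by auto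
  ultimately show ?thesis using d by (simp add: orderings_def doubled_def)
qed

lemma map_doubled:
  assumes "\<And>x. x \<in> set xs \<Longrightarrow> Q x = f x" and "\<And>x. x \<in> set xs \<Longrightarrow> Q (\<sigma> x) = \<sigma> (f x)"
  shows "map Q (doubled xs) = doubled (map f xs)"
  using assms by (simp add: doubled_def)

lemma delta_map_eq:
  assumes \<omega>: "\<omega> \<in> sections Z Z0 \<pi>" and xs: "xs \<in> orderings \<omega>"
  shows "delta_map Z \<pi> \<omega> = alt_orbit (doubled xs)"
proof -
  define ys where "ys = (SOME ys. ys \<in> orderings \<omega>)"
  have ys: "ys \<in> orderings \<omega>"
    unfolding ys_def using ex_orderings[OF finite_section[OF \<omega>]] by (rule someI_ex)
  obtain q where q: "q permutes \<omega>" "ys = map q xs" using ex_permutes_map_eq[OF xs ys] by blast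
  have sub: "\<omega> \<subseteq> Z" using sections_subset[OF \<omega>] .
  \<comment> \<open>The square of \<open>q \<circ> \<sigma>\<close> is an even permutation of \<open>Z\<close> that acts as \<open>q\<close> on \<open>\<omega>\<close> and
      as \<open>\<sigma> \<circ> q \<circ> \<sigma>\<close> on \<open>Z - \<omega>\<close>.\<close>
  define P where "P = q \<circ> restrict_id \<sigma> Z"
  have qZ: "q permutes Z" using permutes_subset[OF q(1) sub] .
  have P: "P permutes Z"
    unfolding P_def using restrict_id_sheet_swap_permutes qZ by (rule permutes_compose)
  then have "P \<circ> P permutes Z" "evenperm (P \<circ> P)"
    using permutes_compose[OF P P] evenperm_comp[of P P] permutes_imp_permutation[OF finite_total P]
    by simp_all
  moreover have "(P \<circ> P) x = q x" and "(P \<circ> P) (\<sigma> x) = \<sigma> (q x)" if x: "x \<in> \<omega>" for x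
  proof -
    have xZ: "x \<in> Z" using x sub by auto
    have qx: "q x \<in> \<omega>" using permutes_in_image[OF q(1)] x by simp
    then have qxZ: "q x \<in> Z" using sub by auto
    have "\<sigma> x \<notin> \<omega>" "\<sigma> (q x) \<notin> \<omega>"
      using section_mem_iff[OF \<omega>, of x] section_mem_iff[OF \<omega>, of "q x"] x qx xZ qxZ by auto
    then have "q (\<sigma> x) = \<sigma> x" "q (\<sigma> (q x)) = \<sigma> (q x)" using permutes_not_in[OF q(1)] by auto
    then show "(P \<circ> P) x = q x" "(P \<circ> P) (\<sigma> x) = \<sigma> (q x)"
      using xZ qxZ sheet_swap_in_fibre(1)[OF xZ] by (simp_all add: P_def restrict_id_def)
  qed
  then have "map (P \<circ> P) (doubled xs) = doubled ys"
    unfolding q(2) using xs by (intro map_doubled) (auto simp: orderings_def)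
  moreover have "distinct (doubled xs)" "set (doubled xs) = Z"
    using doubled_in_orderings[OF \<omega> xs] by (simp_all add: orderings_def)
  ultimately have "alt_orbit (doubled ys) = alt_orbit (doubled xs)"
    using alt_orbit_map_eq_iff[of "doubled xs" "P \<circ> P"] by simp
  then show ?thesis by (simp add: delta_map_def doubled_def ys_def)
qed

lemma delta_map_in_Delta:
  assumes \<omega>: "\<omega> \<in> sections Z Z0 \<pi>" shows "delta_map Z \<pi> \<omega> \<in> Delta Z"
proof -
  obtain xs where xs: "xs \<in> orderings \<omega>" using ex_orderings[OF finite_section[OF \<omega>]] by blast
  show ?thesis
    unfolding delta_map_eq[OF \<omega> xs] Delta_def using doubled_in_orderings[OF \<omega> xs] by (rule imageI)
qed

definition swap_over :: "'z set \<Rightarrow> 'z \<Rightarrow> 'z" where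
  "swap_over K = restrict_id \<sigma> (K \<union> \<sigma> ` K)"

lemma sheet_swap_mem_saturation:
  assumes K: "K \<subseteq> Z" and z: "z \<in> Z"
  shows "\<sigma> z \<in> K \<union> \<sigma> ` K \<longleftrightarrow> z \<in> K \<union> \<sigma> ` K"
proof -
  have "\<sigma> z \<in> \<sigma> ` K \<longleftrightarrow> z \<in> K"
    using inj_on_image_mem_iff[OF inj_on_sheet_swap z K] .
  moreover have "\<sigma> (\<sigma> z) \<in> \<sigma> ` K \<longleftrightarrow> \<sigma> z \<in> K"
    using inj_on_image_mem_iff[OF inj_on_sheet_swap sheet_swap_in_fibre(1)[OF z] K] .
  ultimately show ?thesis using z by auto
qed

lemma swap_over_apply: "swap_over K x = (if x \<in> K \<union> \<sigma> ` K then \<sigma> x else x)"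
  by (simp add: swap_over_def restrict_id_def)

lemma swap_over_sheet_swap:
  assumes "K \<subseteq> Z" "z \<in> Z" shows "swap_over K (\<sigma> z) = \<sigma> (swap_over K z)"
  using sheet_swap_mem_saturation[OF assms] assms(2) unfolding swap_over_apply by auto

lemma swap_over_permutes:
  assumes K: "K \<subseteq> Z" shows "swap_over K permutes Z"
proof (rule bij_imp_permutes)
  have closed: "swap_over K z \<in> Z" if "z \<in> Z" for z
    using that by (simp add: swap_over_def restrict_id_def sheet_swap_in_fibre)
  have "swap_over K (swap_over K z) = z" if z: "z \<in> Z" for z
  proof (cases "z \<in> K \<union> \<sigma> ` K")
    case True
    then have "swap_over K z = \<sigma> z" by (simp add: swap_over_def)
    then show ?thesis using swap_over_sheet_swap[OF K z] z by simp
  next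
    case False
    then show ?thesis by (simp add: swap_over_def)
  qed
  then show "bij_betw (swap_over K) Z Z"
    using closed by (intro bij_betw_byWitness[where f' = "swap_over K"]) auto
  show "swap_over K z = z" if "z \<notin> Z" for z
    using that K sheet_swap_in_fibre(1) by (auto simp: swap_over_def restrict_id_def)
qed

lemma swap_over_insert:
  assumes K: "K \<subseteq> Z" and a: "a \<in> Z" "a \<notin> K \<union> \<sigma> ` K"
  shows "swap_over (insert a K) = Transposition.transpose a (\<sigma> a) \<circ> swap_over K"
proof
  fix x
  let ?S = "K \<union> \<sigma> ` K"
  have sat: "insert a K \<union> \<sigma> ` insert a K = insert a (insert (\<sigma> a) ?S)" by auto
  have \<sigma>a: "\<sigma> a \<notin> ?S" "\<sigma> a \<noteq> a"
    using sheet_swap_mem_saturation[OF K a(1)] a(2) fibre_eq(2)[OF a(1)] by simp_all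
  show "swap_over (insert a K) x = (Transposition.transpose a (\<sigma> a) \<circ> swap_over K) x"
  proof (cases "x \<in> ?S")
    case True
    then have "x \<in> Z" using K sheet_swap_in_fibre(1) by auto
    then have "\<sigma> x \<in> ?S" using True sheet_swap_mem_saturation[OF K] by blast
    then have "\<sigma> x \<noteq> a" using a(2) \<sigma>a(1) by auto
    moreover have "\<sigma> x \<noteq> \<sigma> a"
      using True a(2) inj_on_eq_iff[OF inj_on_sheet_swap \<open>x \<in> Z\<close> a(1)] by auto
    ultimately
    show ?thesis using True unfolding swap_over_apply sat by simp
  next
    case False
    then show ?thesis using a \<sigma>a unfolding swap_over_apply sat by auto
  qed
qed

lemma evenperm_swap_over:
  assumes "K \<subseteq> Z" "K \<inter> \<sigma> ` K = {}"
  shows "evenperm (swap_over K) \<longleftrightarrow> even (card K)"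
  using finite_subset[OF assms(1) finite_total] assms
proof (induction K rule: finite_subset_induct')
  case empty
  have "swap_over {} = id" by (auto simp: swap_over_def restrict_id_def)
  then show ?case by simp
next
  case (insert a K)
  have disj: "K \<inter> \<sigma> ` K = {}" and "a \<notin> \<sigma> ` K" using insert.prems by auto
  then have a: "a \<notin> K \<union> \<sigma> ` K" using insert.hyps(4) by blast
  have K: "K \<subseteq> Z" by fact
  have "evenperm (Transposition.transpose a (\<sigma> a) \<circ> swap_over K) \<longleftrightarrow> \<not> evenperm (swap_over K)"
    using evenperm_comp[OF permutation_swap_id[of a "\<sigma> a"]
        permutes_imp_permutation[OF finite_total swap_over_permutes[OF K]]]
      evenperm_swap[of a "\<sigma> a"] fibre_eq(2)[OF insert.hyps(2)] by auto
  then have "evenperm (swap_over (insert a K)) \<longleftrightarrow> \<not> evenperm (swap_over K)"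
    by (simp only: swap_over_insert[OF K insert.hyps(2) a])
  then show ?case using insert.IH[OF disj] insert.hyps(1,4) by simp
qed

lemma image_swap_over_diff:
  assumes \<omega>: "\<omega> \<in> sections Z Z0 \<pi>" and \<omega>': "\<omega>' \<in> sections Z Z0 \<pi>"
  shows "swap_over (\<omega> - \<omega>') ` \<omega> = \<omega>'"
proof (rule card_subset_eq[OF finite_section[OF \<omega>']])
  have sub: "\<omega> \<subseteq> Z" "\<omega>' \<subseteq> Z" using sections_subset \<omega> \<omega>' by auto
  show "swap_over (\<omega> - \<omega>') ` \<omega> \<subseteq> \<omega>'"
  proof
    fix u assume "u \<in> swap_over (\<omega> - \<omega>') ` \<omega>"
    then obtain x where x: "x \<in> \<omega>" "u = swap_over (\<omega> - \<omega>') x" by auto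
    have "x \<in> Z" using x(1) sub by auto
    have "x \<notin> \<sigma> ` (\<omega> - \<omega>')" using x(1) compl_section_eq_image[OF \<omega>] by auto
    then show "u \<in> \<omega>'"
      using x section_mem_iff[OF \<omega>' \<open>x \<in> Z\<close>] by (auto simp: swap_over_def restrict_id_def)
  qed
  have "inj_on (swap_over (\<omega> - \<omega>')) \<omega>"
    using permutes_inj_on[OF swap_over_permutes] sub by (meson Diff_subset inj_on_subset order_trans)
  then show "card (swap_over (\<omega> - \<omega>') ` \<omega>) = card \<omega>'"
    using card_section \<omega> \<omega>' by (simp add: card_image)
qed

lemma delta_map_eq_iff_even_card_diff:
  assumes \<omega>: "\<omega> \<in> sections Z Z0 \<pi>" and \<omega>': "\<omega>' \<in> sections Z Z0 \<pi>"
  shows "delta_map Z \<pi> \<omega>' = delta_map Z \<pi> \<omega> \<longleftrightarrow> even (card (\<omega> - \<omega>'))"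
proof -
  let ?Q = "swap_over (\<omega> - \<omega>')"
  have sub: "\<omega> - \<omega>' \<subseteq> Z" using sections_subset[OF \<omega>] by auto
  have disj: "(\<omega> - \<omega>') \<inter> \<sigma> ` (\<omega> - \<omega>') = {}" using compl_section_eq_image[OF \<omega>] by auto
  have Q: "?Q permutes Z" using swap_over_permutes[OF sub] .
  obtain xs where xs: "xs \<in> orderings \<omega>" using ex_orderings[OF finite_section[OF \<omega>]] by blast
  have ys: "map ?Q xs \<in> orderings \<omega>'"
    using map_in_orderings[OF xs] image_swap_over_diff[OF \<omega> \<omega>'] permutes_inj_on[OF Q]
      sections_subset[OF \<omega>] by (metis inj_on_subset)
  have "map ?Q (doubled xs) = doubled (map ?Q xs)"
    using xs sections_subset[OF \<omega>] swap_over_sheet_swap[OF sub]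
    by (intro map_doubled) (auto simp: orderings_def)
  moreover have "distinct (doubled xs)" "set (doubled xs) = Z"
    using doubled_in_orderings[OF \<omega> xs] by (simp_all add: orderings_def)
  ultimately have "alt_orbit (doubled (map ?Q xs)) = alt_orbit (doubled xs) \<longleftrightarrow> evenperm ?Q"
    using alt_orbit_map_eq_iff[of "doubled xs" ?Q] Q by simp
  then show ?thesis
    using delta_map_eq[OF \<omega> xs] delta_map_eq[OF \<omega>' ys] evenperm_swap_over[OF sub disj] by simp
qed

lemma finite_sections: "finite (sections Z Z0 \<pi>)"
  using finite_subset[of _ "Pow Z"] finite_total by (auto simp: sections_def)

lemma inj_on_image_PiE_fibres:
  "inj_on (\<lambda>f. f ` Z0) (PiE Z0 (\<lambda>y. {z \<in> Z. \<pi> z = y}))"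
proof (rule inj_onI)
  fix f g assume f: "f \<in> PiE Z0 (\<lambda>y. {z \<in> Z. \<pi> z = y})" and g: "g \<in> PiE Z0 (\<lambda>y. {z \<in> Z. \<pi> z = y})"
    and eq: "f ` Z0 = g ` Z0"
  show "f = g"
  proof (rule PiE_ext[OF f g])
    fix y assume y: "y \<in> Z0"
    have "f y \<in> g ` Z0" using eq y by blast
    then obtain y' where y': "y' \<in> Z0" "f y = g y'" by blast
    have "\<pi> (f y) = y" "\<pi> (g y') = y'" using PiE_mem[OF f y] PiE_mem[OF g y'(1)] by auto
    then show "f y = g y" using y' by simp
  qed
qed

lemma sections_eq_image_PiE_fibres:
  "sections Z Z0 \<pi> = (\<lambda>f. f ` Z0) ` PiE Z0 (\<lambda>y. {z \<in> Z. \<pi> z = y})"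
proof
  show "sections Z Z0 \<pi> \<subseteq> (\<lambda>f. f ` Z0) ` PiE Z0 (\<lambda>y. {z \<in> Z. \<pi> z = y})"
  proof
    fix \<omega> assume "\<omega> \<in> sections Z Z0 \<pi>"
    then have sub: "\<omega> \<subseteq> Z" and bij: "bij_betw \<pi> \<omega> Z0" by (auto simp: sections_def)
    let ?f = "restrict (the_inv_into \<omega> \<pi>) Z0"
    have "?f \<in> PiE Z0 (\<lambda>y. {z \<in> Z. \<pi> z = y})"
      using sub bij_betw_apply[OF bij_betw_the_inv_into[OF bij]] f_the_inv_into_f_bij_betw[OF bij]
      by auto
    moreover have "?f ` Z0 = \<omega>"
      using bij_betw_imp_surj_on[OF bij_betw_the_inv_into[OF bij]] by simp
    ultimately show "\<omega> \<in> (\<lambda>f. f ` Z0) ` PiE Z0 (\<lambda>y. {z \<in> Z. \<pi> z = y})" by blast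
  qed
  show "(\<lambda>f. f ` Z0) ` PiE Z0 (\<lambda>y. {z \<in> Z. \<pi> z = y}) \<subseteq> sections Z Z0 \<pi>"
  proof
    fix \<omega> assume "\<omega> \<in> (\<lambda>f. f ` Z0) ` PiE Z0 (\<lambda>y. {z \<in> Z. \<pi> z = y})"
    then obtain f where f: "f \<in> PiE Z0 (\<lambda>y. {z \<in> Z. \<pi> z = y})" "\<omega> = f ` Z0" by blast
    have fy: "f y \<in> Z" "\<pi> (f y) = y" if "y \<in> Z0" for y using PiE_mem[OF f(1) that] by auto
    have "inj_on \<pi> \<omega>" unfolding f(2) by (rule inj_onI) (auto simp: fy)
    moreover have "\<pi> ` \<omega> = Z0" unfolding f(2) image_image using fy by simp
    ultimately show "\<omega> \<in> sections Z Z0 \<pi>"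
      using fy f(2) by (auto simp: sections_def bij_betw_def)
  qed
qed

lemma card_sections: "card (sections Z Z0 \<pi>) = 2 ^ card Z0"
proof -
  have "card (sections Z Z0 \<pi>) = card (PiE Z0 (\<lambda>y. {z \<in> Z. \<pi> z = y}))"
    unfolding sections_eq_image_PiE_fibres by (rule card_image[OF inj_on_image_PiE_fibres])
  also have "\<dots> = (\<Prod>y\<in>Z0. card {z \<in> Z. \<pi> z = y})" by (rule card_PiE[OF finite_base])
  also have "\<dots> = 2 ^ card Z0" by (simp add: card_fibre)
  finally show ?thesis .
qed

end

section \<open>Isomorphisms of double covers\<close>

locale double_cover_bij = A: double_cover Z Z0 \<pi> + B: double_cover Z' Z0' \<pi>'
  for Z :: "'z set" and Z0 :: "'y set" and \<pi> and Z' :: "'w set" and Z0' :: "'v set" and \<pi>' +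
  fixes h :: "'z \<Rightarrow> 'w" and h0 :: "'y \<Rightarrow> 'v"
  assumes bij_total: "bij_betw h Z Z'"
    and projection_commute: "\<And>z. z \<in> Z \<Longrightarrow> \<pi>' (h z) = h0 (\<pi> z)"
begin

lemma sheet_swap_commute:
  assumes z: "z \<in> Z" shows "B.\<sigma> (h z) = h (A.\<sigma> z)"
proof -
  have hz: "h z \<in> Z'" and hsz: "h (A.\<sigma> z) \<in> Z'"
    using bij_betw_apply[OF bij_total] z A.sheet_swap_in_fibre(1)[OF z] by auto
  have "\<pi>' (h (A.\<sigma> z)) = \<pi>' (h z)"
    using projection_commute z A.sheet_swap_in_fibre[OF z] by simp
  then have "h (A.\<sigma> z) = h z \<or> h (A.\<sigma> z) = B.\<sigma> (h z)" by (rule B.fibre_cases[OF hz hsz])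
  moreover have "h (A.\<sigma> z) \<noteq> h z"
    using inj_on_eq_iff[OF bij_betw_imp_inj_on[OF bij_total] A.sheet_swap_in_fibre(1)[OF z] z]
      A.fibre_eq(2)[OF z] by simp
  ultimately show ?thesis by simp
qed

lemma image_in_sections:
  assumes \<omega>: "\<omega> \<in> sections Z Z0 \<pi>" shows "h ` \<omega> \<in> sections Z' Z0' \<pi>'"
  unfolding B.sections_iff
proof (intro conjI ballI)
  have sub: "\<omega> \<subseteq> Z" using A.sections_subset[OF \<omega>] .
  then show "h ` \<omega> \<subseteq> Z'" using bij_total by (auto simp: bij_betw_def)
  fix z' assume "z' \<in> Z'"
  then obtain z where z: "z \<in> Z" "z' = h z" using bij_total by (auto simp: bij_betw_def)
  have inj: "inj_on h Z" using bij_total by (simp add: bij_betw_def)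
  show "z' \<in> h ` \<omega> \<longleftrightarrow> B.\<sigma> z' \<notin> h ` \<omega>"
    using inj_on_image_mem_iff[OF inj z(1) sub] A.section_mem_iff[OF \<omega> z(1)]
      inj_on_image_mem_iff[OF inj A.sheet_swap_in_fibre(1)[OF z(1)] sub] sheet_swap_commute[OF z(1)] z(2)
    by simp
qed

lemma delta_map_image:
  assumes \<omega>: "\<omega> \<in> sections Z Z0 \<pi>"
  shows "delta_map Z' \<pi>' (h ` \<omega>) = Delta_map h (delta_map Z \<pi> \<omega>)"
proof -
  obtain xs where xs: "xs \<in> orderings \<omega>" using ex_orderings[OF A.finite_section[OF \<omega>]] by blast
  have sub: "set xs \<subseteq> Z" using xs A.sections_subset[OF \<omega>] by (simp add: orderings_def)
  have inj: "inj_on h \<omega>"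
    using A.sections_subset[OF \<omega>] bij_betw_imp_inj_on[OF bij_total] by (rule inj_on_subset[rotated])
  have "B.doubled (map h xs) = map h (A.doubled xs)"
    using sub sheet_swap_commute by (simp add: A.doubled_def B.doubled_def subset_iff)
  then show ?thesis
    using A.delta_map_eq[OF \<omega> xs] B.delta_map_eq[OF image_in_sections[OF \<omega>] map_in_orderings[OF xs inj]]
    by (simp add: Delta_map_alt_orbit)
qed

end

context double_cover
begin

lemma double_cover_bij_transpose:
  assumes z0: "z0 \<in> Z"
  shows "double_cover_bij Z Z0 \<pi> Z Z0 \<pi> (Transposition.transpose z0 (\<sigma> z0)) id"
proof -
  have "Transposition.transpose z0 (\<sigma> z0) permutes Z"
    using z0 sheet_swap_in_fibre(1)[OF z0] by (rule permutes_swap_id)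
  moreover have "\<pi> (Transposition.transpose z0 (\<sigma> z0) z) = id (\<pi> z)" for z
    using sheet_swap_in_fibre(2)[OF z0] by (auto simp: Transposition.transpose_def)
  ultimately show ?thesis by unfold_locales (auto dest: permutes_imp_bij)
qed

lemma delta_map_transpose_image_neq:
  assumes z0: "z0 \<in> Z" and \<omega>: "\<omega> \<in> sections Z Z0 \<pi>"
  shows "delta_map Z \<pi> (Transposition.transpose z0 (\<sigma> z0) ` \<omega>) \<noteq> delta_map Z \<pi> \<omega>"
proof -
  let ?\<tau> = "Transposition.transpose z0 (\<sigma> z0)"
  interpret \<tau>: double_cover_bij Z Z0 \<pi> Z Z0 \<pi> ?\<tau> id by (rule double_cover_bij_transpose[OF z0])
  obtain xs where xs: "xs \<in> orderings \<omega>" using ex_orderings[OF finite_section[OF \<omega>]] by blast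
  have "distinct (doubled xs)" "set (doubled xs) = Z"
    using doubled_in_orderings[OF \<omega> xs] by (simp_all add: orderings_def)
  moreover have "?\<tau> permutes Z" using z0 sheet_swap_in_fibre(1)[OF z0] by (rule permutes_swap_id)
  moreover have "\<not> evenperm ?\<tau>" using fibre_eq(2)[OF z0] by (simp add: evenperm_swap)
  ultimately show ?thesis
    using \<tau>.delta_map_image[OF \<omega>] delta_map_eq[OF \<omega> xs] alt_orbit_map_eq_iff[of "doubled xs" ?\<tau>]
    by (simp add: Delta_map_alt_orbit)
qed

end

section \<open>Orientations\<close>

locale oriented_double_cover = double_cover Z Z0 \<pi>
  for Z :: "'z set" and Z0 :: "'y set" and \<pi> +
  fixes ori :: "nat \<Rightarrow> 'z list set"
  assumes orientation_bij: "bij_betw ori {1, 2} (Delta Z)"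
begin

abbreviation C :: "nat \<Rightarrow> 'z set set" where
  "C i \<equiv> C_part Z Z0 \<pi> ori i"

lemma C_part_iff: "\<omega> \<in> C i \<longleftrightarrow> \<omega> \<in> sections Z Z0 \<pi> \<and> delta_map Z \<pi> \<omega> = ori i"
  by (simp add: C_part_def)

lemma ori_neq: "ori 1 \<noteq> ori 2"
proof
  assume "ori 1 = ori 2"
  then have "(1::nat) = 2"
    by (rule inj_onD[OF bij_betw_imp_inj_on[OF orientation_bij]]) simp_all
  then show False by simp
qed

lemma delta_map_cases:
  "\<omega> \<in> sections Z Z0 \<pi> \<Longrightarrow> delta_map Z \<pi> \<omega> = ori 1 \<or> delta_map Z \<pi> \<omega> = ori 2"
  using delta_map_in_Delta orientation_bij by (auto simp: bij_betw_def)

lemma sections_eq_C_part_Un: "sections Z Z0 \<pi> = C 1 \<union> C 2"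
  using delta_map_cases unfolding C_part_def by blast

lemma C_part_disjoint: "C 1 \<inter> C 2 = {}"
  using ori_neq by (auto simp: C_part_iff)

lemma finite_C_part: "finite (C i)"
  by (rule finite_subset[OF _ finite_sections]) (auto simp: C_part_iff)

lemma same_C_part_iff:
  assumes "\<omega> \<in> sections Z Z0 \<pi>" "\<omega>' \<in> sections Z Z0 \<pi>"
  shows "(\<omega> \<in> C 1 \<and> \<omega>' \<in> C 1 \<or> \<omega> \<in> C 2 \<and> \<omega>' \<in> C 2) \<longleftrightarrow> delta_map Z \<pi> \<omega>' = delta_map Z \<pi> \<omega>"
  using delta_map_cases[OF assms(1)] delta_map_cases[OF assms(2)] ori_neq assms by (auto simp: C_part_iff)

lemma same_C_part_iff_even_card_Int:
  assumes n: "even (card Z0)" and \<omega>: "\<omega> \<in> sections Z Z0 \<pi>" and \<omega>': "\<omega>' \<in> sections Z Z0 \<pi>"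
  shows "(\<omega> \<in> C 1 \<and> \<omega>' \<in> C 1 \<or> \<omega> \<in> C 2 \<and> \<omega>' \<in> C 2) \<longleftrightarrow> even (card (\<omega> \<inter> \<omega>'))"
proof -
  have "card (\<omega> \<inter> \<omega>') + card (\<omega> - \<omega>') = card Z0"
    using card_Int_Diff[OF finite_section[OF \<omega>]] card_section[OF \<omega>] by simp
  then have "even (card (\<omega> - \<omega>')) \<longleftrightarrow> even (card (\<omega> \<inter> \<omega>'))" using n by presburger
  then show ?thesis
    using same_C_part_iff[OF \<omega> \<omega>'] delta_map_eq_iff_even_card_diff[OF \<omega> \<omega>'] by simp
qed

lemma compl_in_C_part:
  assumes n: "even (card Z0)" and \<omega>: "\<omega> \<in> C i" shows "Z - \<omega> \<in> C i"
proof -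
  have s: "\<omega> \<in> sections Z Z0 \<pi>" using \<omega> by (simp add: C_part_iff)
  have "\<omega> - (Z - \<omega>) = \<omega>" using sections_subset[OF s] by auto
  then have "delta_map Z \<pi> (Z - \<omega>) = delta_map Z \<pi> \<omega>"
    using delta_map_eq_iff_even_card_diff[OF s compl_in_sections[OF s]] card_section[OF s] n by simp
  then show ?thesis using \<omega> compl_in_sections[OF s] by (simp add: C_part_iff)
qed

lemma card_C_part:
  assumes "Z0 \<noteq> {}" and i: "i \<in> {1, 2}"
  shows "card (C i) = 2 ^ (card Z0 - 1)"
proof -
  obtain z0 where z0: "z0 \<in> Z" using ex_in_fibre assms(1) by blast
  let ?\<tau> = "Transposition.transpose z0 (\<sigma> z0)"
  interpret \<tau>: double_cover_bij Z Z0 \<pi> Z Z0 \<pi> ?\<tau> id by (rule double_cover_bij_transpose[OF z0])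
  have to_other: "?\<tau> ` \<omega> \<in> C (3 - j)" if \<omega>: "\<omega> \<in> C j" and j: "j \<in> {1, 2}" for \<omega> j
  proof -
    have s: "\<omega> \<in> sections Z Z0 \<pi>" and d: "delta_map Z \<pi> \<omega> = ori j"
      using \<omega> by (simp_all add: C_part_iff)
    have s': "?\<tau> ` \<omega> \<in> sections Z Z0 \<pi>" by (rule \<tau>.image_in_sections[OF s])
    consider "j = 1" | "j = 2" using j by blast
    then have "delta_map Z \<pi> (?\<tau> ` \<omega>) = ori (3 - j)"
      using delta_map_cases[OF s'] delta_map_transpose_image_neq[OF z0 s] d by cases auto
    then show ?thesis using s' by (simp add: C_part_iff)
  qed
  have "bij_betw (image ?\<tau>) (C 1) (C 2)"
    by (rule bij_betw_byWitness[where f' = "image ?\<tau>"])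
      (use to_other[of _ 1] to_other[of _ 2] in \<open>auto simp: image_image\<close>)
  then have "card (C 1) = card (C 2)" by (rule bij_betw_same_card)
  moreover have "card (sections Z Z0 \<pi>) = card (C 1) + card (C 2)"
    unfolding sections_eq_C_part_Un by (rule card_Un_disjoint[OF finite_C_part finite_C_part C_part_disjoint])
  moreover have "(2::nat) ^ card Z0 = 2 * 2 ^ (card Z0 - 1)"
    using assms(1) finite_base by (simp add: power_eq_if)
  ultimately show ?thesis using i card_sections by auto
qed

end

section \<open>Induced actions on families of subsets\<close>

lemma group_actionI:
  assumes G: "group G"
    and closed: "\<And>g x. g \<in> carrier G \<Longrightarrow> x \<in> E \<Longrightarrow> \<phi> g x \<in> E"
    and ext: "\<And>g. g \<in> carrier G \<Longrightarrow> \<phi> g \<in> extensional E"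
    and one: "\<And>x. x \<in> E \<Longrightarrow> \<phi> \<one>\<^bsub>G\<^esub> x = x"
    and mult: "\<And>g h x. g \<in> carrier G \<Longrightarrow> h \<in> carrier G \<Longrightarrow> x \<in> E \<Longrightarrow>
      \<phi> (g \<otimes>\<^bsub>G\<^esub> h) x = \<phi> g (\<phi> h x)"
  shows "group_action G E \<phi>"
proof -
  have inverse: "\<phi> (inv\<^bsub>G\<^esub> g) (\<phi> g x) = x" "\<phi> g (\<phi> (inv\<^bsub>G\<^esub> g) x) = x"
    if "g \<in> carrier G" "x \<in> E" for g x
    using that mult[symmetric] one by (simp_all add: group.inv_closed[OF G] group.l_inv[OF G] group.r_inv[OF G])
  have Bij: "\<phi> g \<in> Bij E" if "g \<in> carrier G" for g
    using that ext closed inverse group.inv_closed[OF G]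
    by (auto simp: Bij_def intro!: bij_betw_byWitness[where f' = "\<phi> (inv\<^bsub>G\<^esub> g)"])
  have "\<phi> \<in> hom G (BijGroup E)"
  proof (rule homI)
    fix g h assume g: "g \<in> carrier G" and h: "h \<in> carrier G"
    have "\<phi> (g \<otimes>\<^bsub>G\<^esub> h) = compose E (\<phi> g) (\<phi> h)"
      using ext[OF group.subgroup_self[THEN subgroup.m_closed, OF G g h]] mult[OF g h]
      by (auto simp: compose_def extensional_def)
    then show "\<phi> (g \<otimes>\<^bsub>G\<^esub> h) = \<phi> g \<otimes>\<^bsub>BijGroup E\<^esub> \<phi> h"
      using Bij g h by (simp add: BijGroup_def)
  qed (simp add: BijGroup_def Bij)
  then show ?thesis
    unfolding group_action_def group_hom_def group_hom_axioms_def using G group_BijGroup by simp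
qed

lemma group_action_image_act:
  assumes act: "group_action G E \<phi>" and C: "C \<subseteq> Pow E"
    and stable: "\<And>g S. g \<in> carrier G \<Longrightarrow> S \<in> C \<Longrightarrow> \<phi> g ` S \<in> C"
  shows "group_action G C (image_act C \<phi>)"
proof (rule group_actionI)
  show "group G" using act by (simp add: group_action_def group_hom_def)
  show "image_act C \<phi> \<one>\<^bsub>G\<^esub> S = S" if "S \<in> C" for S
  proof -
    have "\<phi> \<one>\<^bsub>G\<^esub> ` S = S"
      using that C fun_cong[OF group_action.id_eq_one[OF act, symmetric]] by (auto simp: image_iff)
    then show ?thesis using that by (simp add: image_act_def)
  qed
  show "image_act C \<phi> (g \<otimes>\<^bsub>G\<^esub> h) S = image_act C \<phi> g (image_act C \<phi> h S)"
    if g: "g \<in> carrier G" and h: "h \<in> carrier G" and S: "S \<in> C" for g h S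
  proof -
    have "g \<otimes>\<^bsub>G\<^esub> h \<in> carrier G"
      using act g h by (simp add: group_action_def group_hom_def group.is_monoid monoid.m_closed)
    moreover have "\<phi> (g \<otimes>\<^bsub>G\<^esub> h) ` S = \<phi> g ` \<phi> h ` S"
      unfolding image_image using S C group_action.composition_rule[OF act _ g h]
      by (intro image_cong) auto
    ultimately show ?thesis using S stable[OF h S] by (simp add: image_act_def)
  qed
qed (auto simp: image_act_def stable)

lemma continuous_map_prod_discrete_iff:
  "continuous_map (prod_topology T (discrete_topology X)) (discrete_topology Y) f \<longleftrightarrow>
     (\<forall>g\<in>topspace T. \<forall>x\<in>X. f (g, x) \<in> Y) \<and>
     (\<forall>x\<in>X. \<forall>y\<in>Y. openin T {g \<in> topspace T. f (g, x) = y})"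
  (is "?cont \<longleftrightarrow> ?range \<and> ?slices")
proof
  assume cont: ?cont
  have ?slices
  proof (intro ballI)
    fix x y assume x: "x \<in> X" and y: "y \<in> Y"
    have "continuous_map T (prod_topology T (discrete_topology X)) (\<lambda>g. (g, x))"
      using x by (intro continuous_map_pairedI) auto
    then have "continuous_map T (discrete_topology Y) (f \<circ> (\<lambda>g. (g, x)))"
      using cont by (rule continuous_map_compose)
    then have "openin T {g \<in> topspace T. (f \<circ> (\<lambda>g. (g, x))) g \<in> {y}}"
      by (rule openin_continuous_map_preimage) (simp add: y)
    then show "openin T {g \<in> topspace T. f (g, x) = y}" by simp
  qed
  moreover have ?range using cont by (auto simp: continuous_map_def)
  ultimately show "?range \<and> ?slices" by blast
next
  assume "?range \<and> ?slices"
  then have range: ?range and slices: ?slices by blast+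
  show ?cont
    unfolding continuous_map_def
  proof (intro conjI allI impI)
    show "f \<in> topspace (prod_topology T (discrete_topology X)) \<rightarrow> topspace (discrete_topology Y)"
      using range by auto
    fix V assume "openin (discrete_topology Y) V"
    then have V: "V \<subseteq> Y" by simp
    have "{p \<in> topspace (prod_topology T (discrete_topology X)). f p \<in> V} =
        (\<Union>y\<in>V. \<Union>x\<in>X. {g \<in> topspace T. f (g, x) = y} \<times> {x})"
      by auto
    moreover have "openin (prod_topology T (discrete_topology X)) ({g \<in> topspace T. f (g, x) = y} \<times> {x})"
      if "x \<in> X" "y \<in> V" for x y
      using slices that V by (auto simp: openin_prod_Times_iff)
    ultimately show "openin (prod_topology T (discrete_topology X))
        {p \<in> topspace (prod_topology T (discrete_topology X)). f p \<in> V}"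
      by (auto intro!: openin_Union)
  qed
qed

lemma openin_image_eq:
  assumes "finite S" "finite S'"
    and open_slices: "\<And>z w. z \<in> S \<Longrightarrow> w \<in> S' \<Longrightarrow> openin T {g \<in> topspace T. \<phi> g z = w}"
  shows "openin T {g \<in> topspace T. \<phi> g ` S = S'}"
proof -
  let ?U = "\<lambda>z w. {g \<in> topspace T. \<phi> g z = w}"
  have "{g \<in> topspace T. \<phi> g ` S = S'} =
      ((\<Inter>z\<in>S. \<Union>w\<in>S'. ?U z w) \<inter> topspace T) \<inter> ((\<Inter>w\<in>S'. \<Union>z\<in>S. ?U z w) \<inter> topspace T)"
    by auto
  moreover have "openin T ((\<Inter>z\<in>S. \<Union>w\<in>S'. ?U z w) \<inter> topspace T)"
    using assms by (intro openin_INT) auto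
  moreover have "openin T ((\<Inter>w\<in>S'. \<Union>z\<in>S. ?U z w) \<inter> topspace T)"
    using assms by (intro openin_INT) auto
  ultimately show ?thesis by auto
qed

lemma gamma_set_image_act:
  assumes E: "gamma_set G T E \<phi>" and T: "topspace T = carrier G" and C: "C \<subseteq> Pow E"
    and stable: "\<And>g S. g \<in> carrier G \<Longrightarrow> S \<in> C \<Longrightarrow> \<phi> g ` S \<in> C"
  shows "gamma_set G T C (image_act C \<phi>)"
proof -
  have finite: "finite E" and act: "group_action G E \<phi>"
    and slices: "\<And>z w. z \<in> E \<Longrightarrow> w \<in> E \<Longrightarrow> openin T {g \<in> topspace T. \<phi> g z = w}"
    using E by (auto simp: gamma_set_def continuous_map_prod_discrete_iff)
  have "openin T {g \<in> topspace T. image_act C \<phi> g S = S'}" if "S \<in> C" "S' \<in> C" for S S'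
  proof -
    have "finite S" "finite S'" using that C finite by (auto intro: finite_subset)
    then have "openin T {g \<in> topspace T. \<phi> g ` S = S'}"
      using that C by (intro openin_image_eq slices) auto
    then show ?thesis using that(1) by (simp add: image_act_def)
  qed
  moreover have "finite C" using C finite by (meson finite_Pow_iff finite_subset)
  ultimately show ?thesis
    unfolding gamma_set_def continuous_map_prod_discrete_iff
    using group_action_image_act[OF act C stable] stable T by (auto simp: image_act_def)
qed

section \<open>The quotient by complementation\<close>

lemma image_compl_pair:
  assumes f: "bij_betw f Z Z'" and \<omega>: "\<omega> \<subseteq> Z"
  shows "(\<lambda>\<omega>. f ` \<omega>) ` compl_pair Z \<omega> = compl_pair Z' (f ` \<omega>)"
proof -
  have "f ` (Z - \<omega>) = Z' - f ` \<omega>"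
    using inj_on_image_set_diff[OF bij_betw_imp_inj_on[OF f] Diff_subset \<omega>] f
    by (simp add: bij_betw_def)
  then show ?thesis by (simp add: compl_pair_def)
qed

lemma compl_quot_subset_Pow: "C \<subseteq> Pow Z \<Longrightarrow> compl_quot Z C \<subseteq> Pow (Pow Z)"
  by (auto simp: compl_quot_def compl_pair_def)

lemma covering_iso_compl_quot:
  assumes f: "bij_betw f Z Z'" and C: "C \<subseteq> Pow Z" and C': "(\<lambda>\<omega>. f ` \<omega>) ` C = C'"
    and equivariant: "\<And>g z. g \<in> carrier G \<Longrightarrow> z \<in> Z \<Longrightarrow> f (act g z) = act' g (f z)"
  shows "covering_iso G C (compl_quot Z C) (image_act C act) (quot_act (compl_quot Z C) act) (compl_pair Z)
    C' (compl_quot Z' C') (image_act C' act') (quot_act (compl_quot Z' C') act') (compl_pair Z')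
    (\<lambda>\<omega>. f ` \<omega>) (\<lambda>q. (\<lambda>\<omega>. f ` \<omega>) ` q)"
proof -
  let ?F = "\<lambda>\<omega>. f ` \<omega>"
  have inj_F: "inj_on ?F (Pow Z)" using inj_on_image_Pow[OF bij_betw_imp_inj_on[OF f]] .
  have F_act: "?F (act g ` \<omega>) = act' g ` ?F \<omega>" if "g \<in> carrier G" "\<omega> \<subseteq> Z" for g \<omega>
    unfolding image_image using that equivariant by (intro image_cong) auto
  have F_pair: "?F ` compl_pair Z \<omega> = compl_pair Z' (?F \<omega>)" if "\<omega> \<in> C" for \<omega>
    using that C by (intro image_compl_pair[OF f]) blast
  have bij_C: "bij_betw ?F C C'"
    using inj_on_subset[OF inj_F C] C' by (simp add: bij_betw_def)
  have "(\<lambda>q. ?F ` q) ` compl_quot Z C = (\<lambda>\<omega>. compl_pair Z' (?F \<omega>)) ` C"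
    unfolding compl_quot_def image_image using F_pair by (rule image_cong[OF refl])
  also have "\<dots> = compl_quot Z' C'" using C' by (auto simp: compl_quot_def)
  finally have bij_Q: "bij_betw (\<lambda>q. ?F ` q) (compl_quot Z C) (compl_quot Z' C')"
    using inj_on_subset[OF inj_on_image_Pow[OF inj_F] compl_quot_subset_Pow[OF C]]
    by (simp add: bij_betw_def)
  have "?F (image_act C act g \<omega>) = image_act C' act' g (?F \<omega>)" if "g \<in> carrier G" "\<omega> \<in> C" for g \<omega>
    using that C F_act[of g \<omega>] bij_betw_apply[OF bij_C] by (auto simp: image_act_def)
  moreover have "?F ` quot_act (compl_quot Z C) act g q = quot_act (compl_quot Z' C') act' g (?F ` q)"
    if g: "g \<in> carrier G" and q: "q \<in> compl_quot Z C" for g q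
  proof -
    have "q \<subseteq> Pow Z" using q compl_quot_subset_Pow[OF C] by blast
    have "?F ` (\<lambda>\<omega>. act g ` \<omega>) ` q = (\<lambda>\<omega>. ?F (act g ` \<omega>)) ` q" by (rule image_image)
    also have "\<dots> = (\<lambda>\<omega>. act' g ` ?F \<omega>) ` q"
      using \<open>q \<subseteq> Pow Z\<close> by (intro image_cong refl F_act[OF g]) auto
    also have "\<dots> = (\<lambda>\<omega>. act' g ` \<omega>) ` ?F ` q" by (rule image_image[symmetric])
    finally show ?thesis using q bij_betw_apply[OF bij_Q q] by (simp add: quot_act_def)
  qed
  ultimately show ?thesis
    unfolding covering_iso_def using bij_C bij_Q F_pair by auto
qed

locale compl_stable_family =
  fixes Z :: "'a set" and C :: "'a set set"
  assumes subset_Pow: "C \<subseteq> Pow Z"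
    and compl_closed: "\<And>\<omega>. \<omega> \<in> C \<Longrightarrow> Z - \<omega> \<in> C"
    and compl_not_self: "\<And>\<omega>. \<omega> \<in> C \<Longrightarrow> Z - \<omega> \<noteq> \<omega>"
begin

lemma compl_pair_subset: "\<omega> \<in> C \<Longrightarrow> compl_pair Z \<omega> \<subseteq> C"
  using compl_closed by (simp add: compl_pair_def)

lemma compl_pair_eq:
  assumes \<omega>: "\<omega> \<in> C" and S: "S \<in> compl_pair Z \<omega>"
  shows "compl_pair Z S = compl_pair Z \<omega>"
proof -
  have "Z - (Z - \<omega>) = \<omega>" using subset_Pow \<omega> by blast
  then have "compl_pair Z (Z - \<omega>) = compl_pair Z \<omega>" by (simp add: compl_pair_def insert_commute)
  then show ?thesis using S by (auto simp: compl_pair_def)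
qed

lemma card_compl_pair: "\<omega> \<in> C \<Longrightarrow> card (compl_pair Z \<omega>) = 2"
  using compl_not_self[of \<omega>] by (auto simp: compl_pair_def)

lemma compl_pair_fibre:
  assumes \<omega>: "\<omega> \<in> C" shows "{S \<in> C. compl_pair Z S = compl_pair Z \<omega>} = compl_pair Z \<omega>"
proof
  show "{S \<in> C. compl_pair Z S = compl_pair Z \<omega>} \<subseteq> compl_pair Z \<omega>"
    by (auto simp: compl_pair_def)
  show "compl_pair Z \<omega> \<subseteq> {S \<in> C. compl_pair Z S = compl_pair Z \<omega>}"
    using compl_pair_subset[OF \<omega>] compl_pair_eq[OF \<omega>] by blast
qed

lemma card_compl_quot:
  assumes "finite C" shows "card C = 2 * card (compl_quot Z C)"
proof -
  have U: "\<Union>(compl_quot Z C) = C"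
  proof
    show "\<Union>(compl_quot Z C) \<subseteq> C" by (simp add: compl_quot_def UN_subset_iff compl_pair_subset)
    show "C \<subseteq> \<Union>(compl_quot Z C)" unfolding compl_quot_def compl_pair_def by blast
  qed
  have "2 * card (compl_quot Z C) = card (\<Union>(compl_quot Z C))"
  proof (rule card_partition)
    show "finite (compl_quot Z C)" using assms by (simp add: compl_quot_def)
    show "finite (\<Union>(compl_quot Z C))" using assms U by simp
    show "card c = 2" if "c \<in> compl_quot Z C" for c
      using that card_compl_pair unfolding compl_quot_def by blast
  next
    fix c1 c2 assume c1: "c1 \<in> compl_quot Z C" and c2: "c2 \<in> compl_quot Z C" and "c1 \<noteq> c2"
    obtain a b where a: "a \<in> C" "c1 = compl_pair Z a" and b: "b \<in> C" "c2 = compl_pair Z b"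
      using c1 c2 unfolding compl_quot_def by blast
    show "c1 \<inter> c2 = {}"
    proof (rule ccontr)
      assume "c1 \<inter> c2 \<noteq> {}"
      then obtain S where "S \<in> compl_pair Z a" "S \<in> compl_pair Z b" using a(2) b(2) by blast
      then have "compl_pair Z S = c1" "compl_pair Z S = c2"
        using compl_pair_eq[OF a(1)] compl_pair_eq[OF b(1)] a(2) b(2) by blast+
      with \<open>c1 \<noteq> c2\<close> show False by simp
    qed
  qed
  then show ?thesis using U by simp
qed

lemma image_act_on_compl_pair:
  assumes q: "q \<in> compl_quot Z C" shows "image_act C act g ` q = (\<lambda>\<omega>. act g ` \<omega>) ` q"
proof (rule image_cong[OF refl])
  fix \<omega> assume "\<omega> \<in> q"
  then have "\<omega> \<in> C" using q compl_pair_subset unfolding compl_quot_def by blast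
  then show "image_act C act g \<omega> = act g ` \<omega>" by (simp add: image_act_def)
qed

lemma quot_act_eq_image_act:
  "quot_act (compl_quot Z C) act g = image_act (compl_quot Z C) (image_act C act) g"
  unfolding quot_act_def image_act_def[of "compl_quot Z C" "image_act C act"]
  by (intro restrict_ext) (rule image_act_on_compl_pair[symmetric])

lemma image_act_compl_pair:
  assumes "bij_betw (act g) Z Z" and \<omega>: "\<omega> \<in> C"
  shows "image_act C act g ` compl_pair Z \<omega> = compl_pair Z (image_act C act g \<omega>)"
proof -
  have "compl_pair Z \<omega> \<in> compl_quot Z C" using \<omega> by (simp add: compl_quot_def)
  then have "image_act C act g ` compl_pair Z \<omega> = (\<lambda>\<omega>. act g ` \<omega>) ` compl_pair Z \<omega>"
    by (rule image_act_on_compl_pair)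
  also have "\<dots> = compl_pair Z (act g ` \<omega>)"
    using subset_Pow \<omega> by (intro image_compl_pair[OF assms(1)]) blast
  finally show ?thesis using \<omega> by (simp add: image_act_def)
qed

lemma covering2_compl_quot:
  assumes Z: "gamma_set G T Z act" and T: "topspace T = carrier G"
    and stable: "\<And>g \<omega>. g \<in> carrier G \<Longrightarrow> \<omega> \<in> C \<Longrightarrow> act g ` \<omega> \<in> C"
  shows "covering2 G T C (compl_quot Z C) (image_act C act) (quot_act (compl_quot Z C) act) (compl_pair Z)"
proof -
  let ?Q = "compl_quot Z C"
  have bij: "bij_betw (act g) Z Z" if "g \<in> carrier G" for g
    using Z that group_action.bij_prop0 by (fastforce simp: gamma_set_def Bij_def)
  have act_pair: "image_act C act g ` compl_pair Z \<omega> = compl_pair Z (image_act C act g \<omega>)"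
    if "g \<in> carrier G" "\<omega> \<in> C" for g \<omega>
    by (rule image_act_compl_pair[OF bij that(2)]) (rule that(1))
  have gamma_C: "gamma_set G T C (image_act C act)"
    using Z T subset_Pow stable by (rule gamma_set_image_act)
  have "gamma_set G T ?Q (image_act ?Q (image_act C act))"
  proof (rule gamma_set_image_act[OF gamma_C T])
    show "?Q \<subseteq> Pow C" using compl_pair_subset unfolding compl_quot_def by blast
    fix g q assume g: "g \<in> carrier G" and "q \<in> ?Q"
    then obtain \<omega> where "\<omega> \<in> C" "q = compl_pair Z \<omega>" unfolding compl_quot_def by blast
    then show "image_act C act g ` q \<in> ?Q"
      using act_pair[OF g] stable[OF g] by (simp add: compl_quot_def image_act_def)
  qed
  moreover have "quot_act ?Q act = image_act ?Q (image_act C act)"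
    by (rule ext) (rule quot_act_eq_image_act)
  ultimately have gamma_Q: "gamma_set G T ?Q (quot_act ?Q act)" by simp
  have "compl_pair Z (image_act C act g \<omega>) = quot_act ?Q act g (compl_pair Z \<omega>)"
    if g: "g \<in> carrier G" and \<omega>: "\<omega> \<in> C" for g \<omega>
  proof -
    have "compl_pair Z \<omega> \<in> ?Q" using \<omega> by (simp add: compl_quot_def)
    then show ?thesis using act_pair[OF g \<omega>] image_act_on_compl_pair[of _ act g] by (simp add: quot_act_def)
  qed
  moreover have "card {S \<in> C. compl_pair Z S = q} = 2" if q: "q \<in> ?Q" for q
  proof -
    obtain \<omega> where "\<omega> \<in> C" "q = compl_pair Z \<omega>" using q unfolding compl_quot_def by blast
    then show ?thesis using compl_pair_fibre card_compl_pair by simp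
  qed
  moreover have "\<forall>\<omega>\<in>C. compl_pair Z \<omega> \<in> ?Q" by (simp add: compl_quot_def)
  ultimately show ?thesis unfolding covering2_def using gamma_C gamma_Q by blast
qed

end

section \<open>The two families of sections as coverings\<close>

lemma (in double_cover_bij) image_in_C_part:
  assumes "\<omega> \<in> C_part Z Z0 \<pi> ori i" and "Delta_map h (ori i) = ori' i"
  shows "h ` \<omega> \<in> C_part Z' Z0' \<pi>' ori' i"
  using assms image_in_sections delta_map_image by (simp add: C_part_def)

lemma (in oriented_double_cover) compl_stable_family_C_part:
  assumes "even (card Z0)" and "Z0 \<noteq> {}"
  shows "compl_stable_family Z (C i)"
proof
  show "C i \<subseteq> Pow Z" using sections_subset unfolding C_part_def by blast
qed (use compl_in_C_part[OF assms(1)] compl_neq[OF assms(2)] in auto)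

lemma (in oriented_double_cover) card_compl_quot_C_part:
  assumes "even (card Z0)" and "Z0 \<noteq> {}" and "i \<in> {1, 2}"
  shows "card (compl_quot Z (C i)) = 2 ^ (card Z0 - 2)"
proof -
  interpret compl_stable_family Z "C i" using compl_stable_family_C_part assms(1,2) .
  have "card Z0 \<noteq> 0" using assms(2) finite_base by simp
  then have "card Z0 \<ge> 2" using assms(1) by presburger
  then have "(2::nat) ^ (card Z0 - 1) = 2 * 2 ^ (card Z0 - 2)"
    by (metis Suc_diff_Suc Suc_1 diff_Suc_1 less_le_trans lessI power_Suc)
  then show ?thesis using card_compl_quot[OF finite_C_part] card_C_part[OF assms(2,3)] by simp
qed

lemma oriented_double_cover_of_covering2:
  assumes "covering2 G T Z Z0 act act0 \<pi>" and "orientation G Z act ori"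
  shows "oriented_double_cover Z Z0 \<pi> ori"
  using assms by unfold_locales (auto simp: covering2_def gamma_set_def orientation_def)

lemma C_part_image_act:
  assumes cov: "covering2 G T Z Z0 act act0 \<pi>" and ori: "orientation G Z act ori"
    and g: "g \<in> carrier G" and i: "i \<in> {1, 2}" and \<omega>: "\<omega> \<in> C_part Z Z0 \<pi> ori i"
  shows "act g ` \<omega> \<in> C_part Z Z0 \<pi> ori i"
proof -
  interpret oriented_double_cover Z Z0 \<pi> ori using oriented_double_cover_of_covering2[OF cov ori] .
  have "bij_betw (act g) Z Z"
    using cov g group_action.bij_prop0 by (fastforce simp: covering2_def gamma_set_def Bij_def)
  then interpret double_cover_bij Z Z0 \<pi> Z Z0 \<pi> "act g" "act0 g"
    using cov g by unfold_locales (auto simp: covering2_def)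
  have "ori i \<in> Delta Z" using orientation_bij i by (auto simp: bij_betw_def)
  then have "Delta_map (act g) (ori i) = ori i"
    using ori g i by (auto simp: orientation_def Delta_act_def)
  then show ?thesis using image_in_C_part[OF \<omega>] by simp
qed

lemma image_C_part_eq:
  assumes A: "oriented_double_cover Z Z0 \<pi> ori" and B: "oriented_double_cover Z' Z0' \<pi>' ori'"
    and h: "double_cover_bij Z Z0 \<pi> Z' Z0' \<pi>' h h0"
    and card: "card Z0' = card Z0" and ne: "Z0 \<noteq> {}"
    and ori: "\<forall>j\<in>{1, 2}. Delta_map h (ori j) = ori' j" and i: "i \<in> {1, 2}"
  shows "(\<lambda>\<omega>. h ` \<omega>) ` C_part Z Z0 \<pi> ori i = C_part Z' Z0' \<pi>' ori' i"
proof -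
  interpret A: oriented_double_cover Z Z0 \<pi> ori by (rule A)
  interpret B: oriented_double_cover Z' Z0' \<pi>' ori' by (rule B)
  interpret double_cover_bij Z Z0 \<pi> Z' Z0' \<pi>' h h0 by (rule h)
  have ne': "Z0' \<noteq> {}" using card ne A.finite_base by auto
  have sub: "(\<lambda>\<omega>. h ` \<omega>) ` A.C i \<subseteq> B.C i" using image_in_C_part ori i by auto
  have "A.C i \<subseteq> Pow Z" using A.sections_subset unfolding C_part_def by blast
  then have "inj_on (\<lambda>\<omega>. h ` \<omega>) (A.C i)"
    by (rule inj_on_subset[OF inj_on_image_Pow[OF bij_betw_imp_inj_on[OF bij_total]]])
  then have "card ((\<lambda>\<omega>. h ` \<omega>) ` A.C i) = card (B.C i)"
    using A.card_C_part[OF ne i] B.card_C_part[OF ne' i] card by (simp add: card_image)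
  then show ?thesis by (rule card_subset_eq[OF B.finite_C_part sub])
qed

lemma covering_iso_C_part:
  assumes cov: "covering2 G T Z Z0 act act0 \<pi>" and ori: "orientation G Z act ori"
    and cov': "covering2 G T Z' Z0' act' act0' \<pi>'" and ori': "orientation G Z' act' ori'"
    and iso: "covering_iso G Z Z0 act act0 \<pi> Z' Z0' act' act0' \<pi>' f f0"
    and Delta: "\<forall>j\<in>{1, 2}. Delta_map f (ori j) = ori' j"
    and ne: "Z0 \<noteq> {}" and i: "i \<in> {1, 2}"
  shows "covering_iso G
    (C_part Z Z0 \<pi> ori i) (compl_quot Z (C_part Z Z0 \<pi> ori i))
    (image_act (C_part Z Z0 \<pi> ori i) act) (quot_act (compl_quot Z (C_part Z Z0 \<pi> ori i)) act)
    (compl_pair Z)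
    (C_part Z' Z0' \<pi>' ori' i) (compl_quot Z' (C_part Z' Z0' \<pi>' ori' i))
    (image_act (C_part Z' Z0' \<pi>' ori' i) act') (quot_act (compl_quot Z' (C_part Z' Z0' \<pi>' ori' i)) act')
    (compl_pair Z')
    (\<lambda>\<omega>. f ` \<omega>) (\<lambda>q. (\<lambda>\<omega>. f ` \<omega>) ` q)"
proof -
  interpret A: oriented_double_cover Z Z0 \<pi> ori using oriented_double_cover_of_covering2[OF cov ori] .
  interpret B: oriented_double_cover Z' Z0' \<pi>' ori' using oriented_double_cover_of_covering2[OF cov' ori'] .
  have f: "bij_betw f Z Z'" and f0: "bij_betw f0 Z0 Z0'"
    and equivariant: "\<forall>g\<in>carrier G. \<forall>z\<in>Z. f (act g z) = act' g (f z)"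
    and projection: "\<forall>z\<in>Z. \<pi>' (f z) = f0 (\<pi> z)"
    using iso unfolding covering_iso_def by blast+
  have "double_cover_bij Z Z0 \<pi> Z' Z0' \<pi>' f f0"
    using A.double_cover_axioms B.double_cover_axioms f projection
    by (simp add: double_cover_bij_def double_cover_bij_axioms_def)
  then have image: "(\<lambda>\<omega>. f ` \<omega>) ` A.C i = B.C i"
    by (rule image_C_part_eq[OF A.oriented_double_cover_axioms B.oriented_double_cover_axioms _
          bij_betw_same_card[OF f0, symmetric] ne Delta i])
  have "A.C i \<subseteq> Pow Z" using A.sections_subset unfolding C_part_def by blast
  then show ?thesis using equivariant by (intro covering_iso_compl_quot[OF f _ image]) auto
qed

lemma C_part_covering2:
  assumes T: "topspace T = carrier G"
    and cov: "covering2 G T Z Z0 act act0 \<pi>" and ori: "orientation G Z act ori"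
    and n: "even (card Z0)" "Z0 \<noteq> {}" and i: "i \<in> {1, 2}"
  shows "(\<forall>g \<in> carrier G. \<forall>\<omega> \<in> C_part Z Z0 \<pi> ori i. act g ` \<omega> \<in> C_part Z Z0 \<pi> ori i)
    \<and> (\<forall>\<omega> \<in> C_part Z Z0 \<pi> ori i. Z - \<omega> \<in> C_part Z Z0 \<pi> ori i \<and> Z - \<omega> \<noteq> \<omega> \<and> Z - (Z - \<omega>) = \<omega>)
    \<and> covering2 G T (C_part Z Z0 \<pi> ori i) (compl_quot Z (C_part Z Z0 \<pi> ori i))
        (image_act (C_part Z Z0 \<pi> ori i) act) (quot_act (compl_quot Z (C_part Z Z0 \<pi> ori i)) act)
        (compl_pair Z)
    \<and> card (compl_quot Z (C_part Z Z0 \<pi> ori i)) = 2 ^ (card Z0 - 2)"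
proof -
  interpret oriented_double_cover Z Z0 \<pi> ori using oriented_double_cover_of_covering2[OF cov ori] .
  interpret compl_stable_family Z "C i" using compl_stable_family_C_part[OF n] .
  have stable: "\<And>g \<omega>. g \<in> carrier G \<Longrightarrow> \<omega> \<in> C i \<Longrightarrow> act g ` \<omega> \<in> C i"
    using C_part_image_act[OF cov ori _ i] by blast
  have "gamma_set G T Z act" using cov by (simp add: covering2_def)
  then have "covering2 G T (C i) (compl_quot Z (C i)) (image_act (C i) act)
      (quot_act (compl_quot Z (C i)) act) (compl_pair Z)"
    using T stable by (rule covering2_compl_quot)
  moreover have "Z - \<omega> \<in> C i \<and> Z - \<omega> \<noteq> \<omega> \<and> Z - (Z - \<omega>) = \<omega>" if \<omega>: "\<omega> \<in> C i" for \<omega>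
  proof -
    have "\<omega> \<subseteq> Z" using \<omega> subset_Pow by blast
    then show ?thesis using compl_closed[OF \<omega>] compl_not_self[OF \<omega>] by auto
  qed
  ultimately show ?thesis using stable card_compl_quot_C_part[OF n i] by simp
qed

theorem proposition2p2:
  fixes G :: "('g, 'm) monoid_scheme" and T :: "'g topology"
    and Z :: "'z set" and Z0 :: "'y set"
    and act :: "'g \<Rightarrow> 'z \<Rightarrow> 'z" and act0 :: "'g \<Rightarrow> 'y \<Rightarrow> 'y"
    and \<pi> :: "'z \<Rightarrow> 'y" and ori :: "nat \<Rightarrow> 'z list set" and n :: nat
  assumes "profinite_group G T"
    and "n \<ge> 2" and "even n"
    and "covering2 G T Z Z0 act act0 \<pi>"
    and "orientation G Z act ori"
    and "card Z0 = n"
  shows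
    "sections Z Z0 \<pi> = C_part Z Z0 \<pi> ori 1 \<union> C_part Z Z0 \<pi> ori 2
     \<and> C_part Z Z0 \<pi> ori 1 \<inter> C_part Z Z0 \<pi> ori 2 = {}
     \<and> (\<forall>i \<in> {1::nat, 2}.
          (\<forall>g \<in> carrier G. \<forall>\<omega> \<in> C_part Z Z0 \<pi> ori i. act g ` \<omega> \<in> C_part Z Z0 \<pi> ori i)
        \<and> (\<forall>\<omega> \<in> C_part Z Z0 \<pi> ori i.
             Z - \<omega> \<in> C_part Z Z0 \<pi> ori i \<and> Z - \<omega> \<noteq> \<omega> \<and> Z - (Z - \<omega>) = \<omega>)
        \<and> covering2 G T (C_part Z Z0 \<pi> ori i) (compl_quot Z (C_part Z Z0 \<pi> ori i))
            (image_act (C_part Z Z0 \<pi> ori i) act)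
            (quot_act (compl_quot Z (C_part Z Z0 \<pi> ori i)) act)
            (compl_pair Z)
        \<and> card (compl_quot Z (C_part Z Z0 \<pi> ori i)) = 2 ^ (n - 2))
     \<and> (\<forall>(Z' :: 'w set) (Z0' :: 'v set) act' act0' \<pi>' ori' f f0.
          covering2 G T Z' Z0' act' act0' \<pi>' \<and> orientation G Z' act' ori' \<and>
          covering_iso G Z Z0 act act0 \<pi> Z' Z0' act' act0' \<pi>' f f0 \<and>
          (\<forall>i \<in> {1::nat, 2}. Delta_map f (ori i) = ori' i)
          \<longrightarrow> (\<forall>i \<in> {1::nat, 2}.
                covering_iso G
                  (C_part Z Z0 \<pi> ori i) (compl_quot Z (C_part Z Z0 \<pi> ori i))
                  (image_act (C_part Z Z0 \<pi> ori i) act)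
                  (quot_act (compl_quot Z (C_part Z Z0 \<pi> ori i)) act)
                  (compl_pair Z)
                  (C_part Z' Z0' \<pi>' ori' i) (compl_quot Z' (C_part Z' Z0' \<pi>' ori' i))
                  (image_act (C_part Z' Z0' \<pi>' ori' i) act')
                  (quot_act (compl_quot Z' (C_part Z' Z0' \<pi>' ori' i)) act')
                  (compl_pair Z')
                  (\<lambda>\<omega>. f ` \<omega>) (\<lambda>q. (\<lambda>\<omega>. f ` \<omega>) ` q)))
     \<and> (\<forall>\<omega> \<in> sections Z Z0 \<pi>. \<forall>\<omega>' \<in> sections Z Z0 \<pi>.
          ((\<omega> \<in> C_part Z Z0 \<pi> ori 1 \<and> \<omega>' \<in> C_part Z Z0 \<pi> ori 1) \<or>
           (\<omega> \<in> C_part Z Z0 \<pi> ori 2 \<and> \<omega>' \<in> C_part Z Z0 \<pi> ori 2))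
          \<longleftrightarrow> even (card (\<omega> \<inter> \<omega>')))"
proof -
  interpret oriented_double_cover Z Z0 \<pi> ori
    using oriented_double_cover_of_covering2[OF assms(4,5)] .
  have n: "even (card Z0)" "Z0 \<noteq> {}" using assms(2,3,6) by auto
  have T: "topspace T = carrier G" using assms(1) by (simp add: profinite_group_def)
  show ?thesis
    unfolding assms(6)[symmetric]
  proof (intro conjI)
    show "\<forall>i\<in>{1, 2}. (\<forall>g\<in>carrier G. \<forall>\<omega>\<in>C i. act g ` \<omega> \<in> C i)
        \<and> (\<forall>\<omega>\<in>C i. Z - \<omega> \<in> C i \<and> Z - \<omega> \<noteq> \<omega> \<and> Z - (Z - \<omega>) = \<omega>)
        \<and> covering2 G T (C i) (compl_quot Z (C i)) (image_act (C i) act)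
            (quot_act (compl_quot Z (C i)) act) (compl_pair Z)
        \<and> card (compl_quot Z (C i)) = 2 ^ (card Z0 - 2)"
      by (intro ballI C_part_covering2[OF T assms(4,5) n])
  qed (intro sections_eq_C_part_Un C_part_disjoint allI impI ballI same_C_part_iff_even_card_Int[OF n(1)]
      covering_iso_C_part[OF assms(4,5) _ _ _ _ n(2)]; blast)+
qed

end
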